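(* Let $k\ge2$ and $\ell\ge0$. Among all stable configurations reachable by labeled chip-firing from $k^\ell$ chips labeled $1,\dots,k^\ell$ at the root of the infinite rooted directed $k$-ary tree (viewed as permutations of $\{1,\dots,k^\ell\}$), the permutation $Z_k(\ell)$ has the maximum number of inversions, and this maximum number of inversions is $$\frac{k^{2\ell}-\ell k^{\ell+1}+(\ell-1)k^{\ell}}{4}.$$
   Context: Labeled chip-firing on the infinite rooted directed $k$-ary tree (each vertex has $k$ children ordered left to right, root on layer $1$): a vertex with at least $k$ chips may fire by choosing any $k$ of its chips and sending the $i$-th smallest label among them to its $i$-th leftmost child; a configuration is stable when no vertex has $\ge k$ chips. Starting with $k^\ell$ chips at the root, every stable configuration has exactly one chip on each vertex of layer $\ell+1$ and none elsewhere, and is identified with the permutation of labels read left to right on layer $\ell+1$. $Z_k(\ell)$ is the stable configuration obtained by the strategy in which every vertex on layers $1,\dots,\ell$, holding chips $c_1<\cdots<c_{kq}$, fires the $k$-tuples of consecutive chips $(c_1,\dots,c_k),(c_{k+1},\dots,c_{2k}),\dots$ in sorted order; equivalently, its $p$-th entry is $1+\mathrm{rev}_{k,\ell}(p-1)$, where $\mathrm{rev}_{k,\ell}$ reverses the $\ell$-digit (zero-padded) base-$k$ representation. An inversion of a permutation $\pi$ is a pair $i<j$ with $\pi_i>\pi_j$. *)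

theory Defs
  imports Complex_Main
begin

text \<open>Vertices of the infinite rooted k-ary tree are lists of child indices
  (each < k), the root being the empty list; vertex v lies on layer length v + 1,
  and its i-th leftmost child is v @ [i].\<close>

type_synonym config = "nat list \<Rightarrow> nat set"

definition initial_config :: "nat \<Rightarrow> nat \<Rightarrow> config" where
  "initial_config k l = (\<lambda>v. if v = [] then {1..k ^ l} else {})"

text \<open>One firing move: a vertex v holding at least k chips chooses k of its chips T
  and sends the i-th smallest label of T to its i-th leftmost child v @ [i].\<close>

definition fire :: "nat \<Rightarrow> config \<Rightarrow> config \<Rightarrow> bool" where
  "fire k c c' \<longleftrightarrow> (\<exists>v T. T \<subseteq> c v \<and> card T = k \<and>
     c' = (\<lambda>w. (if w = v then c v - T else c w) \<union>
                (if (\<exists>i<k. w = v @ [i]) then {sorted_list_of_set T ! last w} else {})))"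

definition stable :: "nat \<Rightarrow> config \<Rightarrow> bool" where
  "stable k c \<longleftrightarrow> (\<forall>v. card (c v) < k)"

text \<open>The vertex on layer l+1 at (0-based) position p, counted from the left:
  its child indices are the l base-k digits of p, most significant first.\<close>

definition vertex_at :: "nat \<Rightarrow> nat \<Rightarrow> nat \<Rightarrow> nat list" where
  "vertex_at k l p = map (\<lambda>i. p div k ^ (l - 1 - i) mod k) [0..<l]"

text \<open>The permutation read left to right on layer l+1 of a stable configuration
  (each such vertex holds exactly one chip).\<close>

definition perm_of :: "nat \<Rightarrow> nat \<Rightarrow> config \<Rightarrow> nat list" where
  "perm_of k l c = map (\<lambda>p. the_elem (c (vertex_at k l p))) [0..<k ^ l]"

definition inversions :: "nat list \<Rightarrow> nat" where
  "inversions xs = card {(i, j). i < j \<and> j < length xs \<and> xs ! i > xs ! j}"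

definition rev_digits :: "nat \<Rightarrow> nat \<Rightarrow> nat \<Rightarrow> nat" where
  "rev_digits k l p = (\<Sum>i<l. (p div k ^ i mod k) * k ^ (l - 1 - i))"

definition Z :: "nat \<Rightarrow> nat \<Rightarrow> nat list" where
  "Z k l = map (\<lambda>p. 1 + rev_digits k l p) [0..<k ^ l]"

definition stable_reachable :: "nat \<Rightarrow> nat \<Rightarrow> config \<Rightarrow> bool" where
  "stable_reachable k l c \<longleftrightarrow> (fire k)\<^sup>*\<^sup>* (initial_config k l) c \<and> stable k c"

end

theory Submission
  imports Defs "HOL-Library.Sublist"
begin

text \<open>
  Z_k(l) is reached by firing layer by layer: a vertex w at depth d holds exactly the chips x
  with x - 1 congruent modulo k^d to w read as a base-k number (least significant digit first),
  and firing them in sorted blocks of k hands every child its own residue class. Splitting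
  positions by their least significant digit gives the recurrence
  I(l+1) = k I(l) + (k choose 2) (k^l choose 2) for the number I(l) of inversions of Z_k(l).

  For the upper bound, record at every vertex v the family G v of k-sets fired at v: the chips
  that end up below the child v @ [i] are exactly the i-th smallest elements of these sets.
  Leaves whose paths first split at v into children a < b carry an inversion only if their chips
  x > y are the a-th element of some T in G v and the b-th element of another U in G v, and the
  unordered pair {T, U} determines (x, y). In a stable configuration G v has k^(l-1-d) members
  for v at depth d, so there are at most the sum over d of k^d (k choose 2) (k^(l-1-d) choose 2)
  inversions, which is I(l).
\<close>

section \<open>Base-k digits\<close>

lemma rev_digits_Suc:
  "rev_digits k (Suc l) p = p mod k * k ^ l + rev_digits k l (p div k)"
proof -
  have "rev_digits k (Suc l) p = p mod k * k ^ l + (\<Sum>i<l. p div k ^ Suc i mod k * k ^ (l - Suc i))"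
    unfolding rev_digits_def by (subst sum.lessThan_Suc_shift) simp
  also have "(\<Sum>i<l. p div k ^ Suc i mod k * k ^ (l - Suc i)) = rev_digits k l (p div k)"
    unfolding rev_digits_def by (rule sum.cong) (auto simp: div_mult2_eq mult.commute)
  finally show ?thesis .
qed

lemma mult_add_less_mult_add_iff:
  fixes a b x y K :: nat
  assumes "x < K" "y < K"
  shows "a * K + x < b * K + y \<longleftrightarrow> a < b \<or> a = b \<and> x < y"
proof (cases a b rule: linorder_cases)
  case less
  then have "a * K + x < (a + 1) * K" "(a + 1) * K \<le> b * K"
    using assms by (simp, intro mult_le_mono1, simp)
  then show ?thesis using less by linarith
next
  case greater
  then have "b * K + y < (b + 1) * K" "(b + 1) * K \<le> a * K"
    using assms by (simp, intro mult_le_mono1, simp)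
  then show ?thesis using greater by linarith
qed simp

lemma mult_add_less_mult:
  fixes a b x K :: nat
  assumes "a < b" "x < K"
  shows "a * K + x < b * K"
  using mult_add_less_mult_add_iff[of x K 0 a b] assms by simp

lemma mult_add_eq_mult_add_iff:
  fixes q q' r r' k :: nat
  assumes "r < k" "r' < k"
  shows "q * k + r = q' * k + r' \<longleftrightarrow> q = q' \<and> r = r'"
  using mult_add_less_mult_add_iff[OF assms, of q q']
    mult_add_less_mult_add_iff[OF assms(2,1), of q' q]
  by auto

lemma rev_digits_less: "0 < k \<Longrightarrow> rev_digits k l p < k ^ l"
proof (induction l arbitrary: p)
  case 0
  then show ?case by (simp add: rev_digits_def)
next
  case (Suc l)
  then show ?case
    using mult_add_less_mult[of "p mod k" k "rev_digits k l (p div k)" "k ^ l"]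
    by (simp add: rev_digits_Suc mult.commute)
qed

fun digit_val :: "nat \<Rightarrow> nat list \<Rightarrow> nat" where
  "digit_val k [] = 0"
| "digit_val k (a # v) = a + k * digit_val k v"

lemma digit_val_snoc: "digit_val k (v @ [i]) = digit_val k v + i * k ^ length v"
  by (induction v) (auto simp: algebra_simps)

lemma digit_val_less: "set v \<subseteq> {..<k} \<Longrightarrow> digit_val k v < k ^ length v"
proof (induction v)
  case Nil
  then show ?case by simp
next
  case (Cons a v)
  then show ?case
    using mult_add_less_mult[of "digit_val k v" "k ^ length v" a k] by (simp add: mult.commute)
qed

definition digit_lists :: "nat \<Rightarrow> nat \<Rightarrow> nat list set" where
  "digit_lists k d = {v. set v \<subseteq> {..<k} \<and> length v = d}"

lemma finite_digit_lists: "finite (digit_lists k d)"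
  unfolding digit_lists_def by (rule finite_lists_length_eq) simp

lemma card_digit_lists: "card (digit_lists k d) = k ^ d"
  using card_lists_length_eq[of "{..<k}" d] by (simp add: digit_lists_def)

lemma snoc_in_digit_lists: "v @ [i] \<in> digit_lists k (Suc d) \<longleftrightarrow> v \<in> digit_lists k d \<and> i < k"
  by (auto simp: digit_lists_def)

lemma vertex_at_in_digit_lists: "0 < k \<Longrightarrow> vertex_at k l p \<in> digit_lists k l"
  by (auto simp: vertex_at_def digit_lists_def)

lemma length_vertex_at: "length (vertex_at k l p) = l"
  by (simp add: vertex_at_def)

lemma vertex_at_Suc: "vertex_at k (Suc l) p = vertex_at k l (p div k) @ [p mod k]"
proof -
  have "p div k ^ (l - i) = p div k div k ^ (l - Suc i)" if "i < l" for i
    using that by (metis Suc_diff_Suc div_mult2_eq power_Suc)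
  then show ?thesis by (simp add: vertex_at_def)
qed

lemma digit_val_vertex_at: "digit_val k (vertex_at k l p) = rev_digits k l p"
proof (induction l arbitrary: p)
  case 0
  then show ?case by (simp add: vertex_at_def rev_digits_def)
next
  case (Suc l)
  then show ?case by (simp add: vertex_at_Suc digit_val_snoc rev_digits_Suc length_vertex_at)
qed

lemma vertex_at_diverge:
  assumes "0 < k"
  shows "i < j \<Longrightarrow> j < k ^ l \<Longrightarrow>
    \<exists>v a b r s. a < b \<and> vertex_at k l i = v @ a # r \<and> vertex_at k l j = v @ b # s"
proof (induction l arbitrary: i j)
  case 0
  then show ?case by simp
next
  case (Suc l)
  have "j div k < k ^ l" using Suc.prems(2) by (simp add: less_mult_imp_div_less mult.commute)
  show ?case
  proof (cases "i div k = j div k")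
    case True
    then have "i mod k < j mod k"
      using Suc.prems(1) by (metis div_mult_mod_eq add_less_cancel_left)
    then show ?thesis using True by (auto simp: vertex_at_Suc)
  next
    case False
    then have "i div k < j div k" using Suc.prems(1) by (simp add: div_le_mono le_neq_implies_less)
    then obtain v a b r s where
      "a < b" "vertex_at k l (i div k) = v @ a # r" "vertex_at k l (j div k) = v @ b # s"
      using Suc.IH \<open>j div k < k ^ l\<close> by blast
    then show ?thesis by (auto simp: vertex_at_Suc)
  qed
qed

section \<open>The inversions of Z\<close>

definition strict_pairs :: "nat \<Rightarrow> (nat \<times> nat) set" where
  "strict_pairs n = {(a, b). a < b \<and> b < n}"

lemma finite_strict_pairs: "finite (strict_pairs n)"
  by (rule finite_subset[of _ "{..<n} \<times> {..<n}"]) (auto simp: strict_pairs_def)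

lemma card_strict_pairs: "card (strict_pairs n) = n choose 2"
proof (induction n)
  case 0
  then show ?case by (simp add: strict_pairs_def)
next
  case (Suc n)
  have "strict_pairs (Suc n) = strict_pairs n \<union> (\<lambda>a. (a, n)) ` {..<n}"
    by (auto simp: strict_pairs_def less_Suc_eq)
  moreover have "strict_pairs n \<inter> (\<lambda>a. (a, n)) ` {..<n} = {}"
    by (auto simp: strict_pairs_def)
  ultimately have "card (strict_pairs (Suc n)) = card (strict_pairs n) + n"
    by (simp add: card_Un_disjoint finite_strict_pairs card_image inj_on_def)
  then show ?case using Suc by (simp add: numeral_2_eq_2)
qed

definition Z_inversions :: "nat \<Rightarrow> nat \<Rightarrow> (nat \<times> nat) set" where
  "Z_inversions k l = {(i, j). i < j \<and> j < k ^ l \<and> rev_digits k l j < rev_digits k l i}"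

lemma inversions_Z: "inversions (Z k l) = card (Z_inversions k l)"
  unfolding inversions_def Z_def Z_inversions_def by (rule arg_cong[where f = card]) auto

lemma finite_Z_inversions: "finite (Z_inversions k l)"
  by (rule finite_subset[of _ "{..<k ^ l} \<times> {..<k ^ l}"]) (auto simp: Z_inversions_def)

lemma mem_Z_inversions_Suc:
  assumes "r < k" "r' < k" "q' < k ^ l"
  shows "(q * k + r, q' * k + r') \<in> Z_inversions k (Suc l) \<longleftrightarrow>
    r = r' \<and> (q, q') \<in> Z_inversions k l \<or> r' < r \<and> q < q'"
proof -
  let ?R = "rev_digits k l"
  have k: "0 < k" using assms by simp
  have "q' * k + r' < k ^ Suc l"
    using mult_add_less_mult[OF assms(3) assms(2)] by (simp add: mult.commute)
  moreover have "rev_digits k (Suc l) (q * k + r) = r * k ^ l + ?R q"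
    "rev_digits k (Suc l) (q' * k + r') = r' * k ^ l + ?R q'"
    using assms by (simp_all add: rev_digits_Suc)
  moreover have "q * k + r < q' * k + r' \<longleftrightarrow> q < q' \<or> q = q' \<and> r < r'"
    by (rule mult_add_less_mult_add_iff[OF assms(1,2)])
  moreover have "r' * k ^ l + ?R q' < r * k ^ l + ?R q \<longleftrightarrow> r' < r \<or> r' = r \<and> ?R q' < ?R q"
    by (rule mult_add_less_mult_add_iff) (simp_all add: rev_digits_less k)
  ultimately show ?thesis
    using assms by (auto simp: Z_inversions_def)
qed

lemma Z_inversions_SucD:
  assumes "0 < k" "(i, j) \<in> Z_inversions k (Suc l)"
  shows "i mod k = j mod k \<and> (i div k, j div k) \<in> Z_inversions k l \<or>
    j mod k < i mod k \<and> i div k < j div k \<and> j div k < k ^ l"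
proof -
  have "j < k ^ Suc l" using assms(2) by (simp add: Z_inversions_def)
  then have j: "j div k < k ^ l" by (simp add: less_mult_imp_div_less mult.commute)
  then show ?thesis
    using mem_Z_inversions_Suc[OF mod_less_divisor[OF assms(1), of i]
        mod_less_divisor[OF assms(1), of j] j, of "i div k"] assms(2)
    by simp
qed

lemma Z_inversions_Suc:
  assumes "0 < k"
  shows "Z_inversions k (Suc l) =
    (\<lambda>(r, q, q'). (q * k + r, q' * k + r)) ` ({..<k} \<times> Z_inversions k l) \<union>
    (\<lambda>((q, q'), r', r). (q * k + r, q' * k + r')) ` (strict_pairs (k ^ l) \<times> strict_pairs k)"
    (is "?L = ?A \<union> ?B")
proof (intro equalityI subsetI)
  fix ij assume ij: "ij \<in> ?L"
  obtain i j where ij_eq: "ij = (i, j)" by fastforce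
  from ij ij_eq have "(i, j) \<in> ?L" by simp
  from Z_inversions_SucD[OF assms this]
  show "ij \<in> ?A \<union> ?B"
  proof (elim disjE conjE)
    assume "i mod k = j mod k" "(i div k, j div k) \<in> Z_inversions k l"
    then have "ij = (\<lambda>(r, q, q'). (q * k + r, q' * k + r)) (i mod k, i div k, j div k)"
      "(i mod k, i div k, j div k) \<in> {..<k} \<times> Z_inversions k l"
      using ij_eq assms by (simp_all, metis div_mult_mod_eq)
    then show ?thesis by blast
  next
    assume "j mod k < i mod k" "i div k < j div k" "j div k < k ^ l"
    then have
      "ij = (\<lambda>((q, q'), r', r). (q * k + r, q' * k + r')) ((i div k, j div k), j mod k, i mod k)"
      "((i div k, j div k), j mod k, i mod k) \<in> strict_pairs (k ^ l) \<times> strict_pairs k"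
      using ij_eq assms by (simp_all add: strict_pairs_def)
    then show ?thesis by blast
  qed
next
  fix ij assume "ij \<in> ?A \<union> ?B"
  then show "ij \<in> ?L"
  proof
    assume "ij \<in> ?A"
    then obtain r q q' where "ij = (q * k + r, q' * k + r)" "r < k" "(q, q') \<in> Z_inversions k l"
      by auto
    then show ?thesis
      using mem_Z_inversions_Suc[of r k r q' l q] by (simp add: Z_inversions_def)
  next
    assume "ij \<in> ?B"
    then obtain r r' q q'
      where "ij = (q * k + r, q' * k + r')" "r' < r" "r < k" "q < q'" "q' < k ^ l"
      by (auto simp: strict_pairs_def)
    then show ?thesis using mem_Z_inversions_Suc[of r k r' q' l q] by simp
  qed
qed

lemma card_Z_inversions_Suc:
  assumes "0 < k"
  shows "card (Z_inversions k (Suc l)) =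
    k * card (Z_inversions k l) + (k choose 2) * (k ^ l choose 2)"
proof -
  let ?f = "\<lambda>(r, q, q'). (q * k + r, q' * k + r)"
  let ?g = "\<lambda>((q, q'), r', r). (q * k + r, q' * k + r')"
  let ?A = "{..<k} \<times> Z_inversions k l" and ?B = "strict_pairs (k ^ l) \<times> strict_pairs k"
  have "inj_on ?f ?A"
    by (auto intro!: inj_onI simp: mult_add_eq_mult_add_iff)
  moreover have "inj_on ?g ?B"
    by (auto intro!: inj_onI simp: strict_pairs_def mult_add_eq_mult_add_iff)
  moreover have "?f ` ?A \<inter> ?g ` ?B = {}"
    by (auto simp: strict_pairs_def mult_add_eq_mult_add_iff)
  ultimately have "card (?f ` ?A \<union> ?g ` ?B) = card ?A + card ?B"
    by (simp add: card_Un_disjoint card_image finite_Z_inversions finite_strict_pairs)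
  then show ?thesis
    by (simp add: Z_inversions_Suc[OF assms] card_cartesian_product card_strict_pairs)
qed

definition max_inversions :: "nat \<Rightarrow> nat \<Rightarrow> nat" where
  "max_inversions k l = (\<Sum>d<l. k ^ d * (k choose 2) * (k ^ (l - 1 - d) choose 2))"

lemma max_inversions_Suc:
  "max_inversions k (Suc l) = k * max_inversions k l + (k choose 2) * (k ^ l choose 2)"
proof -
  have "max_inversions k (Suc l) = (k choose 2) * (k ^ l choose 2) +
      (\<Sum>d<l. k ^ Suc d * (k choose 2) * (k ^ (l - Suc d) choose 2))"
    unfolding max_inversions_def by (subst sum.lessThan_Suc_shift) simp
  also have "(\<Sum>d<l. k ^ Suc d * (k choose 2) * (k ^ (l - Suc d) choose 2)) = k * max_inversions k l"
    unfolding max_inversions_def sum_distrib_left by (rule sum.cong) auto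
  finally show ?thesis by simp
qed

lemma card_Z_inversions: "0 < k \<Longrightarrow> card (Z_inversions k l) = max_inversions k l"
proof (induction l)
  case 0
  have "Z_inversions k 0 = {}" by (auto simp: Z_inversions_def)
  then show ?case by (simp add: max_inversions_def)
next
  case (Suc l)
  then show ?case by (simp add: card_Z_inversions_Suc max_inversions_Suc)
qed

lemma real_choose_two: "real (n choose 2) = real n * (real n - 1) / 2"
  by (simp add: binomial_gbinomial gbinomial_prod_rev numeral_2_eq_2 lessThan_Suc)

lemma max_inversions_closed_form:
  "real (max_inversions k l) =
    (real k ^ (2 * l) - real l * real k ^ (l + 1) + (real l - 1) * real k ^ l) / 4"
proof (induction l)
  case 0
  then show ?case by (simp add: max_inversions_def)
next
  case (Suc l)
  have "real (max_inversions k (Suc l)) =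
      real k * real (max_inversions k l) +
      (real k * (real k - 1) / 2) * (real k ^ l * (real k ^ l - 1) / 2)"
    by (simp add: max_inversions_Suc real_choose_two)
  also have "\<dots> = (real k ^ (2 * Suc l) - real (Suc l) * real k ^ (Suc l + 1)
      + (real (Suc l) - 1) * real k ^ Suc l) / 4"
    unfolding Suc by (simp add: power2_eq_square power_mult field_simps)
  finally show ?case .
qed

section \<open>Reaching Z\<close>

lemma sorted_list_of_set_set_strict_sorted: "sorted_wrt (<) xs \<Longrightarrow> sorted_list_of_set (set xs) = xs"
  by (simp add: sorted_list_of_set_sort_remdups strict_sorted_iff distinct_remdups_id
      sorted_sort_id)

lemma sorted_list_of_set_nth_mem: "i < card T \<Longrightarrow> sorted_list_of_set T ! i \<in> T"
  by (metis card.infinite length_sorted_list_of_set not_less_zero nth_mem set_sorted_list_of_set)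

lemma sorted_list_of_set_nth_eq_iff:
  "i < card T \<Longrightarrow> j < card T \<Longrightarrow> sorted_list_of_set T ! i = sorted_list_of_set T ! j \<longleftrightarrow> i = j"
  by (simp add: nth_eq_iff_index_eq)

lemma sorted_list_of_set_nth_less:
  "i < j \<Longrightarrow> j < card T \<Longrightarrow> sorted_list_of_set T ! i < sorted_list_of_set T ! j"
  using sorted_wrt_nth_less[OF strict_sorted_list_of_set] by simp

lemma sorted_list_of_set_nths: "finite T \<Longrightarrow> {sorted_list_of_set T ! i | i. i < card T} = T"
  using set_conv_nth[of "sorted_list_of_set T"] by simp

lemma vertex_cases [case_names parent child other]:
  obtains "w = v" | i where "i < k" "w = v @ [i]" | "w \<noteq> v" "\<forall>i<k. w \<noteq> v @ [i]"
  by blast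

definition send_to_children ::
    "nat \<Rightarrow> config \<Rightarrow> nat list \<Rightarrow> nat set \<Rightarrow> (nat \<Rightarrow> nat set) \<Rightarrow> config" where
  "send_to_children k c v S F = (\<lambda>w. (if w = v then c v - S else c w) \<union>
     (if \<exists>i<k. w = v @ [i] then F (last w) else {}))"

lemma send_to_children_apply:
  "send_to_children k c v S F v = c v - S"
  "i < k \<Longrightarrow> send_to_children k c v S F (v @ [i]) = c (v @ [i]) \<union> F i"
  "w \<noteq> v \<Longrightarrow> \<forall>i<k. w \<noteq> v @ [i] \<Longrightarrow> send_to_children k c v S F w = c w"
  by (auto simp: send_to_children_def)

lemma send_to_children_cong:
  assumes "\<And>i. i < k \<Longrightarrow> F i = F' i"
  shows "send_to_children k c v S F = send_to_children k c v S F'"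
  unfolding send_to_children_def using assms by (intro ext) auto

abbreviation fired :: "nat \<Rightarrow> config \<Rightarrow> nat list \<Rightarrow> nat set \<Rightarrow> config" where
  "fired k c v T \<equiv> send_to_children k c v T (\<lambda>i. {sorted_list_of_set T ! i})"

lemma fire_iff_fired: "fire k c c' \<longleftrightarrow> (\<exists>v T. T \<subseteq> c v \<and> card T = k \<and> c' = fired k c v T)"
  unfolding fire_def send_to_children_def by simp

lemma image_nth_mult_add_lessThan_Suc:
  assumes "k \<le> length xs"
  shows "(\<lambda>g. xs ! (g * k + i)) ` {..<Suc q} =
    insert (xs ! i) ((\<lambda>g. drop k xs ! (g * k + i)) ` {..<q})"
  using assms by (simp add: lessThan_Suc_eq_insert_0 image_image add.assoc)

lemma fire_blocks:
  assumes "0 < k" "sorted_wrt (<) xs" "length xs = k * q" "set xs \<subseteq> c v"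
  shows "(fire k)\<^sup>*\<^sup>* c (send_to_children k c v (set xs) (\<lambda>i. (\<lambda>g. xs ! (g * k + i)) ` {..<q}))"
  using assms(2-4)
proof (induction q arbitrary: xs c)
  case 0
  then show ?case by (simp add: send_to_children_def cong: if_cong flip: fun_upd_def)
next
  case (Suc q)
  let ?T = "set (take k xs)" and ?ys = "drop k xs"
  let ?c = "fired k c v ?T"
  have xs: "set xs = ?T \<union> set ?ys" "length (take k xs) = k" "distinct xs"
    using Suc.prems by (simp_all add: strict_sorted_iff flip: set_append)
  have T: "sorted_list_of_set ?T = take k xs" "card ?T = k"
    using Suc.prems(1) xs(2,3) by (simp_all add: sorted_list_of_set_set_strict_sorted distinct_card)
  have "fire k c ?c"
    unfolding fire_iff_fired using Suc.prems(3) T(2) by (blast dest: in_set_takeD)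
  moreover have
    "(fire k)\<^sup>*\<^sup>* ?c (send_to_children k ?c v (set ?ys) (\<lambda>i. (\<lambda>g. ?ys ! (g * k + i)) ` {..<q}))"
    using Suc.prems xs set_take_disj_set_drop_if_distinct[of xs k k]
    by (intro Suc.IH) (auto simp: send_to_children_apply dest: in_set_dropD)
  moreover have "send_to_children k ?c v (set ?ys) (\<lambda>i. (\<lambda>g. ?ys ! (g * k + i)) ` {..<q}) =
      send_to_children k c v (set xs) (\<lambda>i. (\<lambda>g. xs ! (g * k + i)) ` {..<Suc q})"
    (is "?L = ?R")
  proof
    fix w
    show "?L w = ?R w"
    proof (cases rule: vertex_cases[where w = w and v = v and k = k])
      case parent
      then show ?thesis using xs(1) by (auto simp: send_to_children_apply)
    next
      case (child i)
      then show ?thesis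
        using T(1) xs(2) by (simp add: send_to_children_apply image_nth_mult_add_lessThan_Suc)
    next
      case other
      then show ?thesis by (simp add: send_to_children_apply)
    qed
  qed
  ultimately show ?case by (simp add: converse_rtranclp_into_rtranclp)
qed

lemma residues_atLeastAtMost_eq_image:
  fixes b K M :: nat
  assumes "b < K"
  shows "{x \<in> {1..K * M}. (x - 1) mod K = b} = (\<lambda>g. 1 + b + g * K) ` {..<M}"
proof (intro equalityI subsetI)
  fix x assume x: "x \<in> {x \<in> {1..K * M}. (x - 1) mod K = b}"
  then have "x = 1 + b + (x - 1) div K * K" "(x - 1) div K < M"
    by (auto simp: less_mult_imp_div_less mult.commute intro: div_mult_mod_eq[symmetric])
  then show "x \<in> (\<lambda>g. 1 + b + g * K) ` {..<M}" by blast
next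
  fix x assume "x \<in> (\<lambda>g. 1 + b + g * K) ` {..<M}"
  then obtain g where "g < M" "x = 1 + b + g * K" by blast
  moreover have "b + g * K < M * K"
    using mult_add_less_mult[OF \<open>g < M\<close> assms] by (simp add: add.commute)
  ultimately show "x \<in> {x \<in> {1..K * M}. (x - 1) mod K = b}"
    using assms by (simp add: mult.commute)
qed

text \<open>The chips that the strategy of Z passes through the vertex w.\<close>

definition residue_class :: "nat \<Rightarrow> nat \<Rightarrow> nat list \<Rightarrow> nat set" where
  "residue_class k l w = {x \<in> {1..k ^ l}. (x - 1) mod k ^ length w = digit_val k w}"

lemma residue_class_eq_image:
  assumes "w \<in> digit_lists k d" "d \<le> l"
  shows "residue_class k l w = (\<lambda>g. 1 + digit_val k w + g * k ^ d) ` {..<k ^ (l - d)}"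
proof -
  have "k ^ l = k ^ d * k ^ (l - d)" using assms(2) by (simp flip: power_add)
  moreover have "set w \<subseteq> {..<k}" "length w = d" using assms(1) by (auto simp: digit_lists_def)
  ultimately show ?thesis
    using residues_atLeastAtMost_eq_image[OF digit_val_less[of w k], of "k ^ (l - d)"]
    by (simp add: residue_class_def)
qed

lemma fire_residue_class:
  assumes k: "0 < k" and v: "v \<in> digit_lists k d" and "d < l" and sub: "residue_class k l v \<subseteq> c v"
  shows "(fire k)\<^sup>*\<^sup>* c
    (send_to_children k c v (residue_class k l v) (\<lambda>i. residue_class k l (v @ [i])))"
proof -
  define q where "q = k ^ (l - Suc d)"
  define xs where "xs = map (\<lambda>n. 1 + digit_val k v + n * k ^ d) [0..<k ^ (l - d)]"
  have ld: "l - d = Suc (l - Suc d)" using \<open>d < l\<close> by simp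
  have sorted: "sorted_wrt (<) xs"
    unfolding sorted_wrt_iff_nth_less xs_def using k by auto
  have len: "length xs = k * q" by (simp add: xs_def q_def ld)
  have set_xs: "set xs = residue_class k l v"
    using residue_class_eq_image[OF v] \<open>d < l\<close> by (simp add: xs_def atLeast0LessThan)
  have children: "(\<lambda>g. xs ! (g * k + i)) ` {..<q} = residue_class k l (v @ [i])" if "i < k" for i
  proof -
    have "g * k + i < k ^ (l - d)" if "g < q" for g
      using mult_add_less_mult[OF \<open>g < q\<close> \<open>i < k\<close>] by (simp add: q_def ld mult.commute)
    then have "(\<lambda>g. xs ! (g * k + i)) ` {..<q} =
        (\<lambda>g. 1 + digit_val k (v @ [i]) + g * k ^ Suc d) ` {..<q}"
      using v by (intro image_cong) (auto simp: xs_def digit_val_snoc digit_lists_def algebra_simps)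
    also have "\<dots> = residue_class k l (v @ [i])"
      using residue_class_eq_image[of "v @ [i]" k "Suc d" l] v \<open>i < k\<close> \<open>d < l\<close>
      by (simp add: snoc_in_digit_lists q_def)
    finally show ?thesis .
  qed
  have "(fire k)\<^sup>*\<^sup>* c
      (send_to_children k c v (residue_class k l v) (\<lambda>i. (\<lambda>g. xs ! (g * k + i)) ` {..<q}))"
    using fire_blocks[OF k sorted len, of c v] sub by (simp add: set_xs)
  moreover have
    "send_to_children k c v (residue_class k l v) (\<lambda>i. (\<lambda>g. xs ! (g * k + i)) ` {..<q}) =
      send_to_children k c v (residue_class k l v) (\<lambda>i. residue_class k l (v @ [i]))"
    using children by (rule send_to_children_cong)
  ultimately show ?thesis by simp
qed

definition layer_config :: "nat \<Rightarrow> nat \<Rightarrow> nat \<Rightarrow> config" where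
  "layer_config k l d w = (if w \<in> digit_lists k d then residue_class k l w else {})"

text \<open>Layer d after the vertices in P have passed their chips on to their children.\<close>

definition partial_layer_config :: "nat \<Rightarrow> nat \<Rightarrow> nat \<Rightarrow> nat list set \<Rightarrow> config" where
  "partial_layer_config k l d P w =
     (if w \<in> digit_lists k d - P then residue_class k l w else {}) \<union>
     (if w \<in> digit_lists k (Suc d) \<and> butlast w \<in> P then residue_class k l w else {})"

lemma partial_layer_config_insert:
  assumes k: "0 < k" and "d < l" and v: "v \<in> digit_lists k d" "v \<notin> P"
  shows "(fire k)\<^sup>*\<^sup>* (partial_layer_config k l d P) (partial_layer_config k l d (insert v P))"
proof -
  let ?c = "partial_layer_config k l d P"
  let ?c' = "send_to_children k ?c v (residue_class k l v) (\<lambda>i. residue_class k l (v @ [i]))"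
  have "?c v = residue_class k l v"
    using v by (simp add: partial_layer_config_def digit_lists_def)
  then have "(fire k)\<^sup>*\<^sup>* ?c ?c'"
    using fire_residue_class[OF k v(1) \<open>d < l\<close>] by simp
  moreover have "?c' = partial_layer_config k l d (insert v P)"
  proof
    fix w
    show "?c' w = partial_layer_config k l d (insert v P) w"
    proof (cases rule: vertex_cases[where w = w and v = v and k = k])
      case parent
      then show ?thesis
        using v by (simp add: send_to_children_apply partial_layer_config_def digit_lists_def)
    next
      case (child i)
      then show ?thesis
        using v by (simp add: send_to_children_apply partial_layer_config_def snoc_in_digit_lists)
    next
      case other
      have "\<not> (w \<in> digit_lists k (Suc d) \<and> butlast w = v)"
      proof
        assume w: "w \<in> digit_lists k (Suc d) \<and> butlast w = v"
        then have "w \<noteq> []" by (auto simp: digit_lists_def)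
        then have "last w \<in> set w" by (rule last_in_set)
        then have "last w < k" using w unfolding digit_lists_def by auto
        moreover have "w = v @ [last w]" using w \<open>w \<noteq> []\<close> by (metis append_butlast_last_id)
        ultimately show False using other(2) by blast
      qed
      then show ?thesis
        using other by (cases "w \<in> digit_lists k (Suc d)")
          (simp_all add: send_to_children_apply partial_layer_config_def)
    qed
  qed
  ultimately show ?thesis by simp
qed

lemma layer_config_Suc_reachable:
  assumes k: "0 < k" and "d < l"
  shows "(fire k)\<^sup>*\<^sup>* (layer_config k l d) (layer_config k l (Suc d))"
proof -
  have "(fire k)\<^sup>*\<^sup>* (partial_layer_config k l d {}) (partial_layer_config k l d P)"
    if "finite P" "P \<subseteq> digit_lists k d" for P
    using that
  proof (induction rule: finite_subset_induct)
    case (insert v P)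
    then show ?case
      using partial_layer_config_insert[OF k \<open>d < l\<close>] by (meson rtranclp_trans)
  qed simp
  then have "(fire k)\<^sup>*\<^sup>* (partial_layer_config k l d {})
      (partial_layer_config k l d (digit_lists k d))"
    by (simp add: finite_digit_lists)
  moreover have "partial_layer_config k l d {} = layer_config k l d"
    by (simp add: fun_eq_iff partial_layer_config_def layer_config_def)
  moreover have "partial_layer_config k l d (digit_lists k d) = layer_config k l (Suc d)"
  proof
    fix w
    have "w \<in> digit_lists k (Suc d) \<Longrightarrow> butlast w \<in> digit_lists k d"
      by (auto simp: digit_lists_def dest: in_set_butlastD)
    then show "partial_layer_config k l d (digit_lists k d) w = layer_config k l (Suc d) w"
      by (auto simp: partial_layer_config_def layer_config_def)
  qed
  ultimately show ?thesis by simp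
qed

lemma layer_config_reachable:
  assumes "0 < k" "d \<le> l"
  shows "(fire k)\<^sup>*\<^sup>* (initial_config k l) (layer_config k l d)"
  using assms(2)
proof (induction d)
  case 0
  have "layer_config k l 0 = initial_config k l"
    by (auto simp: fun_eq_iff layer_config_def initial_config_def residue_class_def digit_lists_def)
  then show ?case by simp
next
  case (Suc d)
  then show ?case
    using layer_config_Suc_reachable[OF assms(1), of d l]
    by (meson Suc_leD Suc_le_lessD rtranclp_trans)
qed

lemma layer_config_leaf:
  assumes "w \<in> digit_lists k l"
  shows "layer_config k l l w = {1 + digit_val k w}"
  using residue_class_eq_image[OF assms order_refl] assms
  by (simp add: layer_config_def lessThan_Suc)

lemma stable_layer_config:
  assumes "2 \<le> k"
  shows "stable k (layer_config k l l)"
  unfolding stable_def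
proof
  fix w
  show "card (layer_config k l l w) < k"
    using assms layer_config_leaf[of w k l]
    by (cases "w \<in> digit_lists k l") (simp_all add: layer_config_def)
qed

lemma perm_of_layer_config:
  assumes "0 < k"
  shows "perm_of k l (layer_config k l l) = Z k l"
  unfolding perm_of_def Z_def
  using layer_config_leaf[OF vertex_at_in_digit_lists[OF assms]] by (simp add: digit_val_vertex_at)

lemma Z_stable_reachable:
  assumes "2 \<le> k"
  shows "\<exists>c. stable_reachable k l c \<and> perm_of k l c = Z k l"
proof -
  have "0 < k" using assms by simp
  then show ?thesis
    using layer_config_reachable[of k l l] stable_layer_config[OF assms] perm_of_layer_config
    unfolding stable_reachable_def by blast
qed

section \<open>Chip histories\<close>

definition subtree_chips :: "config \<Rightarrow> nat list \<Rightarrow> nat set" where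
  "subtree_chips c v = (\<Union>w \<in> {w. prefix v w}. c w)"

lemma subset_subtree_chips: "prefix v w \<Longrightarrow> c w \<subseteq> subtree_chips c v"
  unfolding subtree_chips_def by (rule UN_upper) simp

lemma subtree_chips_subset_Nil: "subtree_chips c v \<subseteq> subtree_chips c []"
  by (auto simp: subtree_chips_def)

lemma subtree_chips_initial_config:
  "subtree_chips (initial_config k l) v = (if v = [] then {1..k ^ l} else {})"
  by (auto simp: subtree_chips_def initial_config_def)

text \<open>G v records the k-sets fired at v so far: the chips below the child v @ [i] are exactly
  the i-th smallest elements of these sets.\<close>

locale chip_history =
  fixes k N :: nat and c :: config and G :: "nat list \<Rightarrow> nat set set"
  assumes k_pos: "0 < k"
    and disjoint_vertices: "v \<noteq> w \<Longrightarrow> c v \<inter> c w = {}"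
    and subtree_chips_Nil: "subtree_chips c [] = {1..N}"
    and card_group: "T \<in> G v \<Longrightarrow> card T = k"
    and disjoint_groups: "T \<in> G v \<Longrightarrow> U \<in> G v \<Longrightarrow> T \<noteq> U \<Longrightarrow> T \<inter> U = {}"
    and subtree_chips_eq: "subtree_chips c v = c v \<union> \<Union>(G v)"
    and disjoint_vertex_groups: "c v \<inter> \<Union>(G v) = {}"
    and subtree_chips_child:
      "i < k \<Longrightarrow> subtree_chips c (v @ [i]) = (\<lambda>T. sorted_list_of_set T ! i) ` G v"
begin

lemma finite_subtree_chips: "finite (subtree_chips c v)"
  using subtree_chips_subset_Nil subtree_chips_Nil by (metis finite_atLeastAtMost finite_subset)

lemma finite_vertex: "finite (c v)"
  using finite_subtree_chips subset_subtree_chips[of v v c] by (auto intro: finite_subset)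

lemma finite_groups: "finite (G v)"
proof (rule finite_subset)
  show "G v \<subseteq> Pow (subtree_chips c v)" using subtree_chips_eq[of v] by auto
qed (simp add: finite_subtree_chips)

lemma mem_fired_iff:
  assumes "T \<subseteq> c v"
  shows "x \<in> fired k c v T w \<longleftrightarrow>
    x \<in> c w \<and> x \<notin> T \<or> (\<exists>i<k. w = v @ [i] \<and> x = sorted_list_of_set T ! i)"
  using assms disjoint_vertices[of v w] by (auto simp: send_to_children_def)

lemma mem_subtree_chips_iff_prefix:
  assumes "T \<subseteq> c v" "x \<in> T"
  shows "x \<in> subtree_chips c u \<longleftrightarrow> prefix u v"
proof
  assume "x \<in> subtree_chips c u"
  then obtain w where "prefix u w" "x \<in> c w" by (auto simp: subtree_chips_def)
  moreover have "w = v" using disjoint_vertices[of v w] assms \<open>x \<in> c w\<close> by blast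
  ultimately show "prefix u v" by simp
next
  assume "prefix u v"
  then show "x \<in> subtree_chips c u" using assms subset_subtree_chips by blast
qed

lemma subtree_chips_fired:
  assumes "T \<subseteq> c v"
  shows "subtree_chips (fired k c v T) u =
    (subtree_chips c u - T) \<union> {sorted_list_of_set T ! i | i. i < k \<and> prefix u (v @ [i])}"
proof (rule set_eqI)
  fix x
  have "x \<in> subtree_chips (fired k c v T) u \<longleftrightarrow> (\<exists>w. prefix u w \<and> x \<in> fired k c v T w)"
    by (simp add: subtree_chips_def)
  also have "\<dots> \<longleftrightarrow> (\<exists>w. prefix u w \<and> x \<in> c w) \<and> x \<notin> T \<or>
      (\<exists>i<k. prefix u (v @ [i]) \<and> x = sorted_list_of_set T ! i)"
    unfolding mem_fired_iff[OF assms] by blast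
  also have "\<dots> \<longleftrightarrow>
      x \<in> (subtree_chips c u - T) \<union> {sorted_list_of_set T ! i | i. i < k \<and> prefix u (v @ [i])}"
    unfolding subtree_chips_def by blast
  finally show "x \<in> subtree_chips (fired k c v T) u \<longleftrightarrow>
      x \<in> (subtree_chips c u - T) \<union> {sorted_list_of_set T ! i | i. i < k \<and> prefix u (v @ [i])}" .
qed

lemma subtree_chips_fired_child:
  assumes "T \<subseteq> c v" "i < k"
  shows "subtree_chips (fired k c v T) (v @ [i]) =
    insert (sorted_list_of_set T ! i) (subtree_chips c (v @ [i]))"
proof -
  have "\<not> prefix (v @ [i]) v" by (auto dest: prefix_length_le)
  then have "subtree_chips c (v @ [i]) \<inter> T = {}"
    using mem_subtree_chips_iff_prefix[OF assms(1)] by blast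
  moreover have
    "{sorted_list_of_set T ! j | j. j < k \<and> prefix (v @ [i]) (v @ [j])} =
      {sorted_list_of_set T ! i}"
    using \<open>\<not> prefix (v @ [i]) v\<close> assms(2) by auto
  ultimately show ?thesis
    using subtree_chips_fired[OF assms(1)] by auto
qed

lemma subtree_chips_fired_other:
  assumes T: "T \<subseteq> c v" "card T = k" and u: "\<forall>i<k. u \<noteq> v @ [i]"
  shows "subtree_chips (fired k c v T) u = subtree_chips c u"
proof (cases "prefix u v")
  case True
  have "finite T" using T(2) k_pos card_gt_0_iff by blast
  then have "{sorted_list_of_set T ! i | i. i < k \<and> prefix u (v @ [i])} = T"
    using True sorted_list_of_set_nths[of T] by (simp add: T(2))
  moreover have "T \<subseteq> subtree_chips c u"
    using mem_subtree_chips_iff_prefix[OF T(1)] True by blast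
  ultimately show ?thesis using subtree_chips_fired[OF T(1)] by auto
next
  case False
  then have "{sorted_list_of_set T ! i | i. i < k \<and> prefix u (v @ [i])} = {}"
    using u by auto
  moreover have "subtree_chips c u \<inter> T = {}"
    using mem_subtree_chips_iff_prefix[OF T(1)] False by blast
  ultimately show ?thesis using subtree_chips_fired[OF T(1)] by auto
qed

lemma disjoint_fired_vertices:
  assumes T: "T \<subseteq> c v" "card T = k" and "w \<noteq> w'"
  shows "fired k c v T w \<inter> fired k c v T w' = {}"
proof (rule ccontr)
  assume "fired k c v T w \<inter> fired k c v T w' \<noteq> {}"
  then obtain x where x: "x \<in> fired k c v T w" "x \<in> fired k c v T w'" by blast
  show False
  proof (cases "x \<in> T")
    case True
    then obtain i j where "i < k" "j < k" "w = v @ [i]" "w' = v @ [j]"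
      "x = sorted_list_of_set T ! i" "x = sorted_list_of_set T ! j"
      using x mem_fired_iff[OF T(1)] by meson
    then show False using \<open>w \<noteq> w'\<close> sorted_list_of_set_nth_eq_iff[of i T j] T(2) by simp
  next
    case False
    then have "x \<in> c w" "x \<in> c w'"
      using x mem_fired_iff[OF T(1)] sorted_list_of_set_nth_mem[of _ T] T(2) by blast+
    then show False using disjoint_vertices[OF \<open>w \<noteq> w'\<close>] by blast
  qed
qed

lemma subtree_chips_fired_eq:
  assumes T: "T \<subseteq> c v" "card T = k"
  shows "subtree_chips (fired k c v T) u = fired k c v T u \<union> \<Union>((G(v := insert T (G v))) u)"
proof (cases rule: vertex_cases[where w = u and v = v and k = k])
  case parent
  then show ?thesis
    using subtree_chips_fired_other[OF T] subtree_chips_eq[of v] T(1)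
    by (auto simp: send_to_children_apply)
next
  case (child i)
  then show ?thesis
    using subtree_chips_fired_child[OF T(1)] subtree_chips_eq[of u]
    by (auto simp: send_to_children_apply)
next
  case other
  then show ?thesis
    using subtree_chips_fired_other[OF T] subtree_chips_eq[of u]
    by (simp add: send_to_children_apply)
qed

lemma disjoint_fired_vertex_groups:
  assumes T: "T \<subseteq> c v" "card T = k"
  shows "fired k c v T u \<inter> \<Union>((G(v := insert T (G v))) u) = {}"
proof (cases rule: vertex_cases[where w = u and v = v and k = k])
  case parent
  then show ?thesis using disjoint_vertex_groups[of v] by (auto simp: send_to_children_apply)
next
  case (child i)
  have "sorted_list_of_set T ! i \<in> subtree_chips c u \<longleftrightarrow> prefix u v"
    using mem_subtree_chips_iff_prefix[OF T(1)] sorted_list_of_set_nth_mem[of i T] child T(2)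
    by simp
  then have "sorted_list_of_set T ! i \<notin> \<Union>(G u)"
    using child subtree_chips_eq[of u] by (auto dest: prefix_length_le)
  then show ?thesis using child disjoint_vertex_groups[of u] by (auto simp: send_to_children_apply)
next
  case other
  then show ?thesis using disjoint_vertex_groups[of u] by (simp add: send_to_children_apply)
qed

lemma fired_chip_history:
  assumes T: "T \<subseteq> c v" "card T = k"
  shows "chip_history k N (fired k c v T) (G(v := insert T (G v)))"
proof
  show "subtree_chips (fired k c v T) [] = {1..N}"
    using subtree_chips_fired_other[OF T] subtree_chips_Nil by simp
  show "card U = k" if "U \<in> (G(v := insert T (G v))) w" for U w
    using that card_group T(2) by (auto split: if_splits)
  have "T \<inter> \<Union>(G v) = {}" using T(1) disjoint_vertex_groups by blast
  then show "U \<inter> U' = {}"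
    if "U \<in> (G(v := insert T (G v))) w" "U' \<in> (G(v := insert T (G v))) w" "U \<noteq> U'" for U U' w
    using that disjoint_groups by (auto split: if_splits)
  show "subtree_chips (fired k c v T) (w @ [i]) =
      (\<lambda>U. sorted_list_of_set U ! i) ` (G(v := insert T (G v))) w" if "i < k" for w i
  proof (cases "w = v")
    case True
    then show ?thesis
      using subtree_chips_fired_child[OF T(1) that] subtree_chips_child[OF that] by simp
  next
    case False
    then show ?thesis using subtree_chips_fired_other[OF T] subtree_chips_child[OF that] by simp
  qed
qed (use k_pos disjoint_fired_vertices subtree_chips_fired_eq disjoint_fired_vertex_groups T
    in auto)

end

lemma chip_history_initial_config: "0 < k \<Longrightarrow> chip_history k (k ^ l) (initial_config k l) (\<lambda>_. {})"
  unfolding chip_history_def using subtree_chips_initial_config[of k l]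
  by (simp add: initial_config_def)

lemma reachable_chip_history:
  assumes "0 < k" "(fire k)\<^sup>*\<^sup>* (initial_config k l) c"
  shows "\<exists>G. chip_history k (k ^ l) c G"
  using assms(2)
proof (induction rule: rtranclp_induct)
  case base
  then show ?case using chip_history_initial_config[OF assms(1)] by blast
next
  case (step c c')
  then obtain G where "chip_history k (k ^ l) c G" by blast
  moreover obtain v T where "T \<subseteq> c v" "card T = k" "c' = fired k c v T"
    using step(2) by (auto simp: fire_iff_fired)
  ultimately show ?case using chip_history.fired_chip_history by blast
qed

section \<open>The inversion bound\<close>

definition descent_pairs :: "config \<Rightarrow> nat list \<Rightarrow> nat \<Rightarrow> nat \<Rightarrow> (nat \<times> nat) set" where
  "descent_pairs c v a b =
     {(x, y). x \<in> subtree_chips c (v @ [a]) \<and> y \<in> subtree_chips c (v @ [b]) \<and> y < x}"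

context chip_history
begin

lemma group_nth_mem: "T \<in> G v \<Longrightarrow> i < k \<Longrightarrow> sorted_list_of_set T ! i \<in> T"
  using card_group sorted_list_of_set_nth_mem[of i T] by simp

lemma group_nth_less:
  "T \<in> G v \<Longrightarrow> i < j \<Longrightarrow> j < k \<Longrightarrow> sorted_list_of_set T ! i < sorted_list_of_set T ! j"
  using card_group sorted_list_of_set_nth_less[of i j T] by simp

lemma card_subtree_chips: "card (subtree_chips c v) = card (c v) + k * card (G v)"
proof -
  have finite_union: "finite (\<Union>(G v))"
    using finite_subtree_chips[of v] subtree_chips_eq[of v] by simp
  have "card (subtree_chips c v) = card (c v) + card (\<Union>(G v))"
    unfolding subtree_chips_eq
    by (rule card_Un_disjoint) (simp_all add: finite_vertex finite_union disjoint_vertex_groups)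
  also have "card (\<Union>(G v)) = (\<Sum>T\<in>G v. card T)"
    using k_pos card_group disjoint_groups
    by (intro card_Union_disjoint) (auto simp: pairwise_def disjnt_def intro: card_ge_0_finite)
  also have "\<dots> = k * card (G v)" by (simp add: card_group)
  finally show ?thesis .
qed

lemma card_subtree_chips_child:
  assumes "i < k"
  shows "card (subtree_chips c (v @ [i])) = card (G v)"
proof -
  have "inj_on (\<lambda>T. sorted_list_of_set T ! i) (G v)"
  proof (rule inj_onI)
    fix T U assume TU: "T \<in> G v" "U \<in> G v" "sorted_list_of_set T ! i = sorted_list_of_set U ! i"
    then have "sorted_list_of_set T ! i \<in> T \<inter> U"
      using group_nth_mem[OF TU(1) assms] group_nth_mem[OF TU(2) assms] by simp
    then show "T = U" using disjoint_groups TU(1,2) by blast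
  qed
  then show ?thesis by (simp add: subtree_chips_child[OF assms] card_image)
qed

lemma finite_descent_pairs: "finite (descent_pairs c v a b)"
  by (rule finite_subset[of _ "subtree_chips c (v @ [a]) \<times> subtree_chips c (v @ [b])"])
    (auto simp: descent_pairs_def finite_subtree_chips)

lemma descent_pair_groups:
  assumes ab: "a < b" "b < k" and xy: "(x, y) \<in> descent_pairs c v a b"
  obtains T U where "T \<in> G v" "U \<in> G v" "T \<noteq> U"
    "x = sorted_list_of_set T ! a" "y = sorted_list_of_set U ! b" "x \<in> T" "y \<in> U"
proof -
  obtain T U where TU:
    "T \<in> G v" "x = sorted_list_of_set T ! a" "U \<in> G v" "y = sorted_list_of_set U ! b"
    using xy subtree_chips_child ab by (auto simp: descent_pairs_def)
  moreover have "T \<noteq> U" using TU group_nth_less[OF TU(1) ab] xy by (auto simp: descent_pairs_def)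
  moreover have "x \<in> T" "y \<in> U" using TU group_nth_mem ab by auto
  ultimately show thesis using that[of T U] by simp
qed

lemma swapped_descent_pairs:
  assumes ab: "a < b" "b < k" and "T \<in> G v" "U \<in> G v"
    and "(sorted_list_of_set T ! a, sorted_list_of_set U ! b) \<in> descent_pairs c v a b"
  shows "(sorted_list_of_set U ! a, sorted_list_of_set T ! b) \<notin> descent_pairs c v a b"
  using assms group_nth_less[OF \<open>T \<in> G v\<close> ab] group_nth_less[OF \<open>U \<in> G v\<close> ab]
  by (auto simp: descent_pairs_def)

lemma card_descent_pairs_le:
  assumes ab: "a < b" "b < k"
  shows "card (descent_pairs c v a b) \<le> card (G v) choose 2"
proof -
  define g where "g p = {T \<in> G v. fst p \<in> T \<or> snd p \<in> T}" for p
  have unique: "W = T" if "W \<in> G v" "T \<in> G v" "z \<in> W" "z \<in> T" for W T z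
    using that disjoint_groups by blast
  have g_eq: "g (x, y) = {T, U}" if "T \<in> G v" "U \<in> G v" "x \<in> T" "y \<in> U" for x y T U
    using that unique unfolding g_def by auto
  have "g ` descent_pairs c v a b \<subseteq> {B. B \<subseteq> G v \<and> card B = 2}"
  proof clarify
    fix x y assume "(x, y) \<in> descent_pairs c v a b"
    then obtain T U where "T \<in> G v" "U \<in> G v" "T \<noteq> U" "x \<in> T" "y \<in> U"
      using descent_pair_groups[OF ab] by metis
    then show "g (x, y) \<subseteq> G v \<and> card (g (x, y)) = 2" using g_eq by auto
  qed
  moreover have "inj_on g (descent_pairs c v a b)"
  proof (rule inj_onI, clarify)
    fix x y x' y'
    assume p: "(x, y) \<in> descent_pairs c v a b" and q: "(x', y') \<in> descent_pairs c v a b"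
      and g: "g (x, y) = g (x', y')"
    obtain T U where T:
      "T \<in> G v" "U \<in> G v" "x = sorted_list_of_set T ! a" "y = sorted_list_of_set U ! b"
      "g (x, y) = {T, U}"
      using descent_pair_groups[OF ab p] g_eq by metis
    obtain T' U' where T':
      "T' \<in> G v" "U' \<in> G v" "x' = sorted_list_of_set T' ! a" "y' = sorted_list_of_set U' ! b"
      "g (x', y') = {T', U'}"
      using descent_pair_groups[OF ab q] g_eq by metis
    have "T = T' \<and> U = U' \<or> T = U' \<and> U = T'"
      using T(5) T'(5) g by (auto simp: doubleton_eq_iff)
    moreover have "\<not> (T = U' \<and> U = T')"
      using swapped_descent_pairs[OF ab T(1,2)] p q T(3,4) T'(3,4) by auto
    ultimately show "x = x' \<and> y = y'" using T T' by auto
  qed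
  ultimately have "card (descent_pairs c v a b) \<le> card {B. B \<subseteq> G v \<and> card B = 2}"
    by (intro card_inj_on_le) (simp_all add: finite_groups)
  also have "\<dots> = card (G v) choose 2" by (simp add: n_subsets finite_groups)
  finally show ?thesis .
qed

end

lemma inversions_distinct:
  assumes "distinct xs"
  shows "inversions xs =
    card ((\<lambda>(i, j). (xs ! i, xs ! j)) ` {(i, j). i < j \<and> j < length xs \<and> xs ! j < xs ! i})"
proof -
  have "inj_on (\<lambda>(i, j). (xs ! i, xs ! j)) {(i, j). i < j \<and> j < length xs \<and> xs ! j < xs ! i}"
    using assms by (auto intro!: inj_onI simp: nth_eq_iff_index_eq)
  then show ?thesis by (simp add: inversions_def card_image)
qed

locale stable_chip_history = chip_history k "k ^ l" c G for k l :: nat and c G +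
  assumes stable: "stable k c"
begin

lemma card_groups_if_card_subtree_chips:
  assumes "card (subtree_chips c v) = k * m"
  shows "card (G v) = m"
proof -
  have "card (c v) < k" using stable by (simp add: stable_def)
  moreover have "card (c v) + k * card (G v) = k * m"
    using assms card_subtree_chips by simp
  ultimately show ?thesis
    using mult_add_eq_mult_add_iff[of "card (c v)" k 0 "card (G v)" m] by (simp add: mult.commute)
qed

lemma card_subtree_chips_stable:
  "v \<in> digit_lists k d \<Longrightarrow> d \<le> l \<Longrightarrow> card (subtree_chips c v) = k ^ (l - d)"
proof (induction v arbitrary: d rule: rev_induct)
  case Nil
  then show ?case using subtree_chips_Nil by (simp add: digit_lists_def)
next
  case (snoc i v)
  then obtain d' where d: "d = Suc d'" "v \<in> digit_lists k d'" "i < k"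
    by (auto simp: digit_lists_def)
  have "card (subtree_chips c v) = k * k ^ (l - d)"
    using snoc d by (simp add: Suc_diff_Suc flip: power_Suc)
  then show ?case
    using card_groups_if_card_subtree_chips card_subtree_chips_child[OF d(3)] by simp
qed

lemma card_groups_stable:
  assumes "v \<in> digit_lists k d" "d < l"
  shows "card (G v) = k ^ (l - Suc d)"
  using card_subtree_chips_stable[OF assms(1)] assms(2)
  by (intro card_groups_if_card_subtree_chips) (simp add: Suc_diff_Suc flip: power_Suc)

lemma leaf_singleton:
  assumes "2 \<le> k" "v \<in> digit_lists k l"
  shows "\<exists>x. c v = {x}"
proof -
  have "card (c v) + k * card (G v) = 1"
    using card_subtree_chips_stable[OF assms(2)] card_subtree_chips by simp
  then have "card (c v) = 1" using assms(1) by (cases "card (G v)") simp_all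
  then show ?thesis by (rule card_1_singletonE) blast
qed

lemma perm_of_nth:
  assumes "2 \<le> k" "p < k ^ l"
  shows "c (vertex_at k l p) = {perm_of k l c ! p}"
proof -
  obtain x where "c (vertex_at k l p) = {x}"
    using leaf_singleton[OF assms(1) vertex_at_in_digit_lists[OF k_pos]] by blast
  moreover have "perm_of k l c ! p = the_elem (c (vertex_at k l p))"
    using assms(2) by (simp add: perm_of_def)
  ultimately show ?thesis by simp
qed

lemma distinct_perm_of:
  assumes "2 \<le> k"
  shows "distinct (perm_of k l c)"
proof -
  have "perm_of k l c ! i \<noteq> perm_of k l c ! j" if ij: "i < j" "j < k ^ l" for i j
  proof -
    obtain v a b r s where "a < b" "vertex_at k l i = v @ a # r" "vertex_at k l j = v @ b # s"
      using vertex_at_diverge[OF k_pos ij] by blast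
    then have "c (vertex_at k l i) \<inter> c (vertex_at k l j) = {}" by (intro disjoint_vertices) auto
    then show ?thesis using perm_of_nth assms ij by simp
  qed
  then show ?thesis
    by (auto simp: distinct_conv_nth perm_of_def linorder_neq_iff)
qed

lemma inversions_perm_of_le:
  assumes "2 \<le> k"
  shows "inversions (perm_of k l c) \<le> max_inversions k l"
proof -
  let ?\<pi> = "perm_of k l c"
  let ?D = "\<Union>d<l. \<Union>v \<in> digit_lists k d. \<Union>(a, b) \<in> strict_pairs k. descent_pairs c v a b"
  have "(\<lambda>(i, j). (?\<pi> ! i, ?\<pi> ! j)) ` {(i, j). i < j \<and> j < length ?\<pi> \<and> ?\<pi> ! j < ?\<pi> ! i} \<subseteq> ?D"
  proof clarify
    fix i j assume ij: "i < j" "j < length ?\<pi>" "?\<pi> ! j < ?\<pi> ! i"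
    then have "j < k ^ l" by (simp add: perm_of_def)
    then obtain v a b r s
      where vab: "a < b" "vertex_at k l i = v @ a # r" "vertex_at k l j = v @ b # s"
      using vertex_at_diverge[OF k_pos ij(1)] by blast
    have "i < k ^ l" using ij(1) \<open>j < k ^ l\<close> by simp
    have "{?\<pi> ! i} \<subseteq> subtree_chips c (v @ [a])"
      using subset_subtree_chips[of "v @ [a]" "vertex_at k l i" c]
        perm_of_nth[OF assms \<open>i < k ^ l\<close>] vab(2)
      by (simp add: prefix_def)
    moreover have "{?\<pi> ! j} \<subseteq> subtree_chips c (v @ [b])"
      using subset_subtree_chips[of "v @ [b]" "vertex_at k l j" c]
        perm_of_nth[OF assms \<open>j < k ^ l\<close>] vab(3)
      by (simp add: prefix_def)
    ultimately have "(?\<pi> ! i, ?\<pi> ! j) \<in> descent_pairs c v a b"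
      using ij(3) by (simp add: descent_pairs_def)
    moreover have "v \<in> digit_lists k (length v)" "length v < l" "(a, b) \<in> strict_pairs k"
      using vertex_at_in_digit_lists[OF k_pos, of l i] vertex_at_in_digit_lists[OF k_pos, of l j]
        vab
      by (auto simp: digit_lists_def strict_pairs_def)
    ultimately show "(?\<pi> ! i, ?\<pi> ! j) \<in> ?D" by blast
  qed
  moreover have "finite ?D"
    by (intro finite_UN_I) (auto simp: finite_digit_lists finite_strict_pairs finite_descent_pairs)
  ultimately have "inversions ?\<pi> \<le> card ?D"
    by (simp add: inversions_distinct[OF distinct_perm_of[OF assms]] card_mono)
  also have "\<dots> \<le>
      (\<Sum>d<l. \<Sum>v \<in> digit_lists k d. \<Sum>(a, b) \<in> strict_pairs k. card (descent_pairs c v a b))"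
    by (intro card_UN_le[THEN order_trans] sum_mono)
      (auto simp: finite_digit_lists finite_strict_pairs)
  also have "\<dots> \<le> (\<Sum>d<l. \<Sum>v \<in> digit_lists k d. \<Sum>(a, b) \<in> strict_pairs k. k ^ (l - Suc d) choose 2)"
    by (intro sum_mono)
      (auto simp: strict_pairs_def card_groups_stable
        intro: card_descent_pairs_le[THEN order_trans])
  also have "\<dots> = max_inversions k l"
    by (simp add: max_inversions_def card_digit_lists card_strict_pairs mult.assoc)
  finally show ?thesis .
qed

end

lemma stable_reachable_inversions_le:
  assumes "2 \<le> k" "stable_reachable k l c"
  shows "inversions (perm_of k l c) \<le> max_inversions k l"
proof -
  obtain G where "chip_history k (k ^ l) c G"
    using reachable_chip_history[of k l c] assms by (auto simp: stable_reachable_def)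
  then have "stable_chip_history k l c G"
    using assms(2)
    by (simp add: stable_chip_history_def stable_chip_history_axioms_def stable_reachable_def)
  then show ?thesis using stable_chip_history.inversions_perm_of_le assms(1) by blast
qed

theorem theorem6p1:
  fixes k l :: nat
  assumes "k \<ge> 2"
  shows "(\<exists>c. stable_reachable k l c \<and> perm_of k l c = Z k l)
       \<and> (\<forall>c. stable_reachable k l c \<longrightarrow> inversions (perm_of k l c) \<le> inversions (Z k l))
       \<and> real (inversions (Z k l)) =
           (real k ^ (2 * l) - real l * real k ^ (l + 1) + (real l - 1) * real k ^ l) / 4"
proof -
  have "inversions (Z k l) = max_inversions k l"
    using inversions_Z card_Z_inversions assms by simp
  then show ?thesis
    using Z_stable_reachable[OF assms] stable_reachable_inversions_le[OF assms]
      max_inversions_closed_form by simp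
qed

end
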